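(* For any dimension $d>0$ and $\delta>0$, there exists a ReLU neural network $\mathcal N:\mathbb{R}^d \to \mathbb{R}^d$ with 2 hidden layers, width $4d^2$, and magnitudes of weights at most $\frac{1}{\delta}$, that sorts (outputs the entries in ascending order) any input $\mathbf{x} \in \mathcal S^{d}_{\delta}$ all of whose entries are non-zero. For general input $\mathbf{x}\in\mathbb{R}^d$, every output value is bounded in magnitude by $d \|\mathbf{x}\|_{\infty}$.
   Context: $\mathcal S^d_\delta$ is the set of vectors $\mathbf{x}\in\mathbb{R}^d$ whose non-zero entries all lie in $[\delta,1-\delta]$ and are pairwise at distance at least $\delta$ (i.e. $|x_i-x_j|\ge\delta$ for all $i\ne j$ with $x_i,x_j$ non-zero). A ReLU network applies $[z]_+=\max\{0,z\}$ after each affine hidden map, with an affine output layer; width is the number of neurons in the largest hidden layer. *)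

theory Defs
  imports Main "HOL.Real"
begin

(* Vectors in R^n are represented as functions nat => real, only indices < n matter.
   A matrix with m rows and n columns is nat => nat => real, entries W i j with i<m, j<n. *)

definition relu :: "real \<Rightarrow> real" where
  "relu z = max 0 z"

definition affine :: "nat \<Rightarrow> (nat \<Rightarrow> nat \<Rightarrow> real) \<Rightarrow> (nat \<Rightarrow> real) \<Rightarrow> (nat \<Rightarrow> real) \<Rightarrow> (nat \<Rightarrow> real)" where
  "affine n W b x = (\<lambda>i. (\<Sum>j<n. W i j * x j) + b i)"

definition relu_layer :: "nat \<Rightarrow> (nat \<Rightarrow> nat \<Rightarrow> real) \<Rightarrow> (nat \<Rightarrow> real) \<Rightarrow> (nat \<Rightarrow> real) \<Rightarrow> (nat \<Rightarrow> real)" where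
  "relu_layer n W b x = (\<lambda>i. relu (affine n W b x i))"

definition relu_net2 ::
  "nat \<Rightarrow> nat \<Rightarrow> nat \<Rightarrow> (nat \<Rightarrow> nat \<Rightarrow> real) \<Rightarrow> (nat \<Rightarrow> real) \<Rightarrow>
   (nat \<Rightarrow> nat \<Rightarrow> real) \<Rightarrow> (nat \<Rightarrow> real) \<Rightarrow> (nat \<Rightarrow> nat \<Rightarrow> real) \<Rightarrow> (nat \<Rightarrow> real) \<Rightarrow>
   (nat \<Rightarrow> real) \<Rightarrow> (nat \<Rightarrow> real)" where
  "relu_net2 d n1 n2 W1 b1 W2 b2 W3 b3 x =
     affine n2 W3 b3 (relu_layer n1 W2 b2 (relu_layer d W1 b1 x))"

definition params_bounded ::
  "real \<Rightarrow> nat \<Rightarrow> nat \<Rightarrow> nat \<Rightarrow> nat \<Rightarrow> (nat \<Rightarrow> nat \<Rightarrow> real) \<Rightarrow> (nat \<Rightarrow> real) \<Rightarrow>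
   (nat \<Rightarrow> nat \<Rightarrow> real) \<Rightarrow> (nat \<Rightarrow> real) \<Rightarrow> (nat \<Rightarrow> nat \<Rightarrow> real) \<Rightarrow> (nat \<Rightarrow> real) \<Rightarrow> bool" where
  "params_bounded c d n1 n2 dout W1 b1 W2 b2 W3 b3 \<longleftrightarrow>
     (\<forall>i<n1. \<forall>j<d. \<bar>W1 i j\<bar> \<le> c) \<and> (\<forall>i<n1. \<bar>b1 i\<bar> \<le> c) \<and>
     (\<forall>i<n2. \<forall>j<n1. \<bar>W2 i j\<bar> \<le> c) \<and> (\<forall>i<n2. \<bar>b2 i\<bar> \<le> c) \<and>
     (\<forall>i<dout. \<forall>j<n2. \<bar>W3 i j\<bar> \<le> c) \<and> (\<forall>i<dout. \<bar>b3 i\<bar> \<le> c)"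

definition in_S :: "nat \<Rightarrow> real \<Rightarrow> (nat \<Rightarrow> real) \<Rightarrow> bool" where
  "in_S d \<delta> x \<longleftrightarrow>
     (\<forall>i<d. x i \<noteq> 0 \<longrightarrow> \<delta> \<le> x i \<and> x i \<le> 1 - \<delta>) \<and>
     (\<forall>i<d. \<forall>j<d. i \<noteq> j \<and> x i \<noteq> 0 \<and> x j \<noteq> 0 \<longrightarrow> \<delta> \<le> \<bar>x i - x j\<bar>)"

definition sorts_to :: "nat \<Rightarrow> (nat \<Rightarrow> real) \<Rightarrow> (nat \<Rightarrow> real) \<Rightarrow> bool" where
  "sorts_to d x y \<longleftrightarrow>
     (\<exists>\<sigma>. bij_betw \<sigma> {..<d} {..<d} \<and> (\<forall>i<d. y i = x (\<sigma> i))) \<and>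
     (\<forall>i j. i \<le> j \<and> j < d \<longrightarrow> y i \<le> y j)"

definition linf :: "nat \<Rightarrow> (nat \<Rightarrow> real) \<Rightarrow> real" where
  "linf d x = Max ((\<lambda>i. \<bar>x i\<bar>) ` {..<d})"

end

theory Submission
  imports Defs
begin

text \<open>
  Both hidden layers have \<open>4d\<^sup>2\<close> neurons, indexed by triples \<open>(j, k, c)\<close> with
  \<open>j, k < d\<close> and \<open>c < 4\<close>. The first layer computes \<open>relu (\<plusminus>x\<^sub>j)\<close> and the two ReLU pieces of
  the clipped step \<open>min 1 (max 0 ((x\<^sub>j - x\<^sub>k) / \<delta>))\<close>. On \<open>\<delta>\<close>-separated inputs these steps add
  up to the rank \<open>r\<^sub>j\<close> of \<open>x\<^sub>j\<close>, so the second layer can form \<open>relu (t + x\<^sub>j)\<close>,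
  \<open>relu (t - x\<^sub>j)\<close> and \<open>relu t\<close> for \<open>t = r\<^sub>j - i\<close>. The output \<open>i\<close> is
  \<open>\<Sum>\<^sub>j hat (r\<^sub>j - i) x\<^sub>j\<close> with \<open>hat t y = relu (t + y) + relu (t - y) - 2 relu t\<close>, which for
  \<open>0 \<le> y \<le> 1\<close> is \<open>y\<close> at \<open>t = 0\<close> and vanishes at all other integers; hence it is the entry of
  rank \<open>i\<close>. Since \<open>\<bar>hat t y\<bar> \<le> \<bar>y\<bar>\<close> for all \<open>t\<close>, every output is bounded by \<open>d \<parallel>x\<parallel>\<^sub>\<infinity>\<close>.
  The bias \<open>-i\<close> respects the weight bound \<open>1/\<delta>\<close> when \<open>d \<delta> \<le> 1\<close>; otherwise no input in
  \<open>S\<^sup>d\<^sub>\<delta>\<close> has \<open>d\<close> distinct non-zero entries and the zero network works.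
\<close>

section \<open>Sums over neuron indices\<close>

lemma sum_lessThan_mult:
  fixes a b :: nat
  shows "(\<Sum>n<a * b. f n) = (\<Sum>q<a. \<Sum>r<b. f (q * b + r) :: 'a::comm_monoid_add)"
proof -
  have "(\<Sum>r<b. f (q * b + r)) = sum f {q * b..<q * b + b}" for q
    using sum.shift_bounds_nat_ivl[of f 0 "q * b" b] by (simp add: atLeast0LessThan add.commute)
  then show ?thesis by (simp add: sum.nat_group)
qed

definition neuron :: "nat \<Rightarrow> nat \<Rightarrow> nat \<Rightarrow> nat \<Rightarrow> nat" where
  "neuron d j k c = (j * d + k) * 4 + c"

lemma neuron_decode [simp]:
  assumes "k < d" "c < 4"
  shows "neuron d j k c div 4 div d = j" "neuron d j k c div 4 mod d = k" "neuron d j k c mod 4 = c"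
proof -
  have "(c + 4 * m) div 4 = m" "(c + 4 * m) mod 4 = c" for m
    using assms(2) by simp_all
  then have "neuron d j k c div 4 = j * d + k" "neuron d j k c mod 4 = c"
    by (simp_all only: neuron_def add.commute[of _ c] mult.commute[of _ 4])
  then show "neuron d j k c div 4 div d = j" "neuron d j k c div 4 mod d = k" "neuron d j k c mod 4 = c"
    using assms(1) by simp_all
qed

lemma sum_neurons:
  "(\<Sum>n<4 * d\<^sup>2. f n) = (\<Sum>j<d. \<Sum>k<d. \<Sum>c<4. f (neuron d j k c) :: 'a::comm_monoid_add)"
proof -
  have "4 * d\<^sup>2 = d * d * 4" by (simp add: power2_eq_square)
  then show ?thesis
    by (simp only: sum_lessThan_mult[where a = "d * d" and b = 4]
      sum_lessThan_mult[where a = d and b = d] neuron_def)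
qed

lemma sum_lessThan_4: "(\<Sum>c<4::nat. f c) = f 0 + f 1 + f 2 + (f 3 :: 'a::comm_monoid_add)"
  by (simp add: numeral_eq_Suc add.assoc)

section \<open>ReLU identities\<close>

lemma relu_minus_relu_neg: "relu y - relu (- y) = y"
  by (simp add: relu_def)

lemma relu_minus_relu_shift: "relu t - relu (t - 1) = min 1 (max 0 t)"
  by (simp add: relu_def)

definition relu_hat :: "real \<Rightarrow> real \<Rightarrow> real" where
  "relu_hat t y = relu (t + y) + relu (t - y) - 2 * relu t"

definition hat_shift :: "nat \<Rightarrow> real" where
  "hat_shift c = (if c = 0 then 1 else if c = 1 then -1 else 0)"

definition hat_weight :: "nat \<Rightarrow> real" where
  "hat_weight c = (if c < 2 then 1 else -1)"

lemma relu_hat_eq_sum: "relu_hat t y = (\<Sum>c<4. hat_weight c * relu (t + hat_shift c * y))"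
  by (simp add: relu_hat_def sum_lessThan_4 hat_weight_def hat_shift_def)

lemma abs_relu_hat_le: "\<bar>relu_hat t y\<bar> \<le> \<bar>y\<bar>"
  by (simp add: relu_hat_def relu_def)

lemma relu_hat_of_int:
  assumes "0 \<le> y" "y \<le> 1"
  shows "relu_hat (of_int m) y = (if m = 0 then y else 0)"
proof -
  consider "m = 0" | "m \<ge> 1" | "m \<le> -1" by linarith
  then show ?thesis
  proof cases
    case 2
    then have "of_int m \<ge> (1::real)" by simp
    then show ?thesis using assms by (simp add: relu_hat_def relu_def)
  next
    case 3
    then have "of_int m \<le> (-1::real)" by simp
    then show ?thesis using assms by (simp add: relu_hat_def relu_def)
  qed (use assms in \<open>simp add: relu_hat_def relu_def\<close>)
qed

section \<open>Ranks of separated vectors\<close>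

definition rank :: "nat \<Rightarrow> (nat \<Rightarrow> 'a::linorder) \<Rightarrow> nat \<Rightarrow> nat" where
  "rank d x j = card {k. k < d \<and> x k < x j}"

lemma rank_less_rank:
  assumes "i < d" "x i < x j"
  shows "rank d x i < rank d x j"
proof -
  have "{k. k < d \<and> x k < x i} \<subset> {k. k < d \<and> x k < x j}"
    using assms by auto
  then show ?thesis
    unfolding rank_def by (intro psubset_card_mono) auto
qed

lemma rank_less_rank_iff:
  assumes "i < d" "j < d"
  shows "rank d x i < rank d x j \<longleftrightarrow> x i < x j"
proof -
  consider "x i < x j" | "x i = x j" | "x j < x i"
    using less_linear by blast
  then show ?thesis
    using rank_less_rank[OF assms(1), of x j] rank_less_rank[OF assms(2), of x i]
    by cases (auto simp: rank_def)
qed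

lemma rank_less:
  assumes "j < d"
  shows "rank d x j < d"
proof -
  have "rank d x j \<le> card ({..<d} - {j})"
    unfolding rank_def by (intro card_mono) auto
  then show ?thesis
    using assms by simp
qed

lemma bij_betw_rank:
  assumes "inj_on x {..<d}"
  shows "bij_betw (rank d x) {..<d} {..<d}"
proof -
  have inj: "inj_on (rank d x) {..<d}"
  proof (rule inj_onI)
    fix i j
    assume "i \<in> {..<d}" "j \<in> {..<d}" "rank d x i = rank d x j"
    then have "x i = x j"
      using rank_less_rank_iff[of i d j x] rank_less_rank_iff[of j d i x] by auto
    then show "i = j"
      using assms \<open>i \<in> {..<d}\<close> \<open>j \<in> {..<d}\<close> by (auto dest: inj_onD)
  qed
  moreover have "rank d x ` {..<d} = {..<d}"
    using inj rank_less by (intro endo_inj_surj) auto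
  ultimately show ?thesis
    unfolding bij_betw_def by simp
qed

lemma sorts_to_by_rank:
  assumes "inj_on x {..<d}" and y: "\<And>j. j < d \<Longrightarrow> y (rank d x j) = x j"
  shows "sorts_to d x y"
proof -
  have bij: "bij_betw (rank d x) {..<d} {..<d}"
    using bij_betw_rank[OF assms(1)] .
  define \<sigma> where "\<sigma> = the_inv_into {..<d} (rank d x)"
  have \<sigma>: "bij_betw \<sigma> {..<d} {..<d}"
    unfolding \<sigma>_def using bij by (rule bij_betw_the_inv_into)
  have rank_\<sigma>: "rank d x (\<sigma> i) = i" if "i < d" for i
    unfolding \<sigma>_def using bij that by (simp add: f_the_inv_into_f_bij_betw)
  have \<sigma>_less: "\<sigma> i < d" if "i < d" for i
    using \<sigma> that by (auto simp: bij_betw_def)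
  have y_\<sigma>: "y i = x (\<sigma> i)" if "i < d" for i
    using y[OF \<sigma>_less[OF that]] rank_\<sigma>[OF that] by simp
  have "y i \<le> y j" if "i \<le> j" "j < d" for i j
  proof (rule ccontr)
    assume "\<not> y i \<le> y j"
    then have "rank d x (\<sigma> j) < rank d x (\<sigma> i)"
      using that by (simp add: y_\<sigma> rank_less_rank_iff \<sigma>_less)
    then show False
      using that by (simp add: rank_\<sigma>)
  qed
  then show ?thesis
    unfolding sorts_to_def using \<sigma> y_\<sigma> by blast
qed

definition separated :: "nat \<Rightarrow> real \<Rightarrow> (nat \<Rightarrow> real) \<Rightarrow> bool" where
  "separated d \<delta> x \<longleftrightarrow> (\<forall>j<d. \<forall>k<d. j \<noteq> k \<longrightarrow> \<delta> \<le> \<bar>x j - x k\<bar>)"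

lemma separated_inj_on:
  assumes "separated d \<delta> x" "0 < \<delta>"
  shows "inj_on x {..<d}"
  using assms by (force simp: separated_def intro: inj_onI)

definition soft_rank :: "nat \<Rightarrow> real \<Rightarrow> (nat \<Rightarrow> real) \<Rightarrow> nat \<Rightarrow> real" where
  "soft_rank d \<delta> x j = (\<Sum>k<d. relu ((x j - x k) / \<delta>) - relu ((x j - x k) / \<delta> - 1))"

lemma soft_rank_eq_rank:
  assumes "separated d \<delta> x" "0 < \<delta>" "j < d"
  shows "soft_rank d \<delta> x j = real (rank d x j)"
proof -
  have "relu ((x j - x k) / \<delta>) - relu ((x j - x k) / \<delta> - 1) = of_bool (x k < x j)" if "k < d" for k
  proof (cases "x k < x j")
    case True
    then have "\<delta> \<le> x j - x k"
      using assms that unfolding separated_def by force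
    then have "1 \<le> (x j - x k) / \<delta>"
      using assms(2) by (simp add: field_simps)
    then show ?thesis
      using True by (simp add: relu_minus_relu_shift)
  next
    case False
    then have "(x j - x k) / \<delta> \<le> 0"
      using assms(2) by (simp add: divide_nonpos_pos)
    then show ?thesis
      using False by (simp add: relu_minus_relu_shift)
  qed
  then have "soft_rank d \<delta> x j = (\<Sum>k<d. of_bool (x k < x j))"
    unfolding soft_rank_def by (intro sum.cong) auto
  also have "\<dots> = real (rank d x j)"
    by (simp add: rank_def Int_def)
  finally show ?thesis .
qed

lemma separated_rank_lower_bound:
  assumes "separated d \<delta> x" "0 < \<delta>" "\<And>j. j < d \<Longrightarrow> a \<le> x j" "j < d"
  shows "a + \<delta> * rank d x j \<le> x j"
proof -
  have bij: "bij_betw (rank d x) {..<d} {..<d}"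
    using bij_betw_rank[OF separated_inj_on[OF assms(1,2)]] .
  have "\<forall>j<d. rank d x j = n \<longrightarrow> a + \<delta> * n \<le> x j" for n
  proof (induction n)
    case 0
    then show ?case using assms(3) by simp
  next
    case (Suc n)
    show ?case
    proof (intro allI impI)
      fix j
      assume j: "j < d" "rank d x j = Suc n"
      then have "n < d"
        using rank_less[of j d x] by simp
      then obtain k where k: "k < d" "rank d x k = n"
        using bij unfolding bij_betw_def by (metis imageE lessThan_iff)
      then have "x k < x j"
        using j rank_less_rank_iff[of k d j x] by simp
      then have "x k + \<delta> \<le> x j"
        using assms(1) j k unfolding separated_def by force
      moreover have "a + \<delta> * n \<le> x k"
        using Suc.IH k by blast
      ultimately show "a + \<delta> * real (Suc n) \<le> x j"
        by (simp add: algebra_simps)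
    qed
  qed
  then show ?thesis
    using assms(4) by blast
qed

lemma in_S_separated:
  assumes "in_S d \<delta> x" "\<forall>i<d. x i \<noteq> 0"
  shows "separated d \<delta> x"
  using assms unfolding in_S_def separated_def by blast

lemma in_S_nonzero_delta_bound:
  assumes "in_S d \<delta> x" "\<forall>i<d. x i \<noteq> 0" "0 < \<delta>" "0 < d"
  shows "real (d + 1) * \<delta> \<le> 1"
proof -
  have sep: "separated d \<delta> x"
    using in_S_separated[OF assms(1,2)] .
  have range: "\<delta> \<le> x j" "x j \<le> 1 - \<delta>" if "j < d" for j
    using assms(1,2) that unfolding in_S_def by auto
  obtain j where j: "j < d" "rank d x j = d - 1"
    using bij_betw_rank[OF separated_inj_on[OF sep assms(3)]] assms(4)
    unfolding bij_betw_def by (metis diff_less imageE lessThan_iff zero_less_one)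
  have "\<delta> + \<delta> * real (d - 1) \<le> 1 - \<delta>"
    using separated_rank_lower_bound[OF sep assms(3) range(1) j(1)] range(2)[OF j(1)] j(2) by simp
  then show ?thesis
    using assms(4) by (simp add: of_nat_diff algebra_simps)
qed

section \<open>The sorting network\<close>

definition sort_W1 :: "nat \<Rightarrow> real \<Rightarrow> nat \<Rightarrow> nat \<Rightarrow> real" where
  "sort_W1 d \<delta> n l = (let j = n div 4 div d; k = n div 4 mod d; c = n mod 4 in
     if c < 2 then (of_bool (l = j) - of_bool (l = k)) / \<delta>
     else if c = 2 then of_bool (l = j) else - of_bool (l = j))"

definition sort_b1 :: "nat \<Rightarrow> real" where
  "sort_b1 n = (if n mod 4 = 1 then -1 else 0)"

definition sort_W2 :: "nat \<Rightarrow> nat \<Rightarrow> nat \<Rightarrow> real" where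
  "sort_W2 d m n =
     (let j = m div 4 mod d; c = m mod 4; j' = n div 4 div d; k = n div 4 mod d; c' = n mod 4 in
     if j' \<noteq> j then 0 else if c' = 0 then 1 else if c' = 1 then -1
     else if k \<noteq> 0 then 0 else if c' = 2 then hat_shift c else - hat_shift c)"

definition sort_b2 :: "nat \<Rightarrow> nat \<Rightarrow> real" where
  "sort_b2 d m = - real (m div 4 div d)"

definition sort_W3 :: "nat \<Rightarrow> nat \<Rightarrow> nat \<Rightarrow> real" where
  "sort_W3 d i m = (if m div 4 div d = i then hat_weight (m mod 4) else 0)"

lemma affine_sort_W1:
  assumes "j < d" "k < d" "c < 4"
  shows "affine d (sort_W1 d \<delta>) sort_b1 x (neuron d j k c) =
    (if c = 0 then (x j - x k) / \<delta> else if c = 1 then (x j - x k) / \<delta> - 1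
     else if c = 2 then x j else - x j)"
  using assms
  by (auto simp: affine_def sort_W1_def sort_b1_def left_diff_distrib sum_subtractf diff_divide_distrib
      sum_divide_distrib[symmetric] sum_negf)

lemma affine_sum_neurons:
  "affine (4 * d\<^sup>2) W b h m = (\<Sum>j<d. \<Sum>k<d. \<Sum>c<4. W m (neuron d j k c) * h (neuron d j k c)) + b m"
  by (simp add: affine_def sum_neurons)

lemma affine_sort_W2:
  assumes "i < d" "j < d" "c < 4"
  shows "affine (4 * d\<^sup>2) (sort_W2 d) (sort_b2 d) h (neuron d i j c) =
    (\<Sum>k<d. h (neuron d j k 0) - h (neuron d j k 1)) - real i
    + hat_shift c * (h (neuron d j 0 2) - h (neuron d j 0 3))"
proof -
  have block: "(\<Sum>k<d. \<Sum>c'<4. sort_W2 d (neuron d i j c) (neuron d j' k c') * h (neuron d j' k c'))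
    = (if j' = j then (\<Sum>k<d. h (neuron d j k 0) - h (neuron d j k 1)
         + (if k = 0 then hat_shift c * (h (neuron d j k 2) - h (neuron d j k 3)) else 0)) else 0)" for j'
    using assms by (auto simp: sort_W2_def sum_lessThan_4 algebra_simps intro!: sum.cong)
  have "(\<Sum>k<d. h (neuron d j k 0) - h (neuron d j k 1)
         + (if k = 0 then hat_shift c * (h (neuron d j k 2) - h (neuron d j k 3)) else 0))
      = (\<Sum>k<d. h (neuron d j k 0) - h (neuron d j k 1))
        + hat_shift c * (h (neuron d j 0 2) - h (neuron d j 0 3))"
    using assms by (simp add: sum.distrib)
  then show ?thesis
    using assms by (simp add: affine_sum_neurons block sort_b2_def)
qed

lemma affine_sort_W3:
  assumes "i < d"
  shows "affine (4 * d\<^sup>2) (sort_W3 d) (\<lambda>_. 0) h i =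
    (\<Sum>j<d. \<Sum>c<4. hat_weight c * h (neuron d i j c))"
proof -
  have block: "(\<Sum>j<d. \<Sum>c<4. sort_W3 d i (neuron d i' j c) * h (neuron d i' j c))
    = (if i' = i then (\<Sum>j<d. \<Sum>c<4. hat_weight c * h (neuron d i j c)) else 0)" for i'
    by (simp add: sort_W3_def)
  show ?thesis
    using assms by (simp add: affine_sum_neurons block)
qed

abbreviation sort_net :: "nat \<Rightarrow> real \<Rightarrow> (nat \<Rightarrow> real) \<Rightarrow> nat \<Rightarrow> real" where
  "sort_net d \<delta> \<equiv>
     relu_net2 d (4 * d\<^sup>2) (4 * d\<^sup>2) (sort_W1 d \<delta>) sort_b1 (sort_W2 d) (sort_b2 d) (sort_W3 d) (\<lambda>_. 0)"

lemma sort_net_eq: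
  assumes "i < d"
  shows "sort_net d \<delta> x i = (\<Sum>j<d. relu_hat (soft_rank d \<delta> x j - real i) (x j))"
proof -
  define h1 where "h1 = relu_layer d (sort_W1 d \<delta>) sort_b1 x"
  define h2 where "h2 = relu_layer (4 * d\<^sup>2) (sort_W2 d) (sort_b2 d) h1"
  have h1: "h1 (neuron d j k 0) = relu ((x j - x k) / \<delta>)"
    "h1 (neuron d j k 1) = relu ((x j - x k) / \<delta> - 1)"
    "h1 (neuron d j k 2) = relu (x j)" "h1 (neuron d j k 3) = relu (- x j)"
    if "j < d" "k < d" for j k
    using that by (simp_all add: h1_def relu_layer_def affine_sort_W1)
  have h2: "h2 (neuron d i j c) = relu (soft_rank d \<delta> x j - real i + hat_shift c * x j)"
    if "j < d" "c < 4" for j c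
    using assms that \<comment> \<open>with \<open>One_nat_def\<close> the index \<open>1\<close> becomes \<open>Suc 0\<close> and \<open>h1\<close> no longer matches\<close>
    by (simp add: h2_def relu_layer_def affine_sort_W2 h1 soft_rank_def relu_minus_relu_neg
        del: One_nat_def)
  have "sort_net d \<delta> x i = affine (4 * d\<^sup>2) (sort_W3 d) (\<lambda>_. 0) h2 i"
    by (simp add: relu_net2_def h1_def h2_def)
  also have "\<dots> = (\<Sum>j<d. \<Sum>c<4. hat_weight c * h2 (neuron d i j c))"
    by (rule affine_sort_W3[OF assms])
  also have "\<dots> = (\<Sum>j<d. relu_hat (soft_rank d \<delta> x j - real i) (x j))"
    by (simp add: h2 relu_hat_eq_sum)
  finally show ?thesis .
qed

lemma abs_le_linf: "i < d \<Longrightarrow> \<bar>x i\<bar> \<le> linf d x"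
  unfolding linf_def by (intro Max_ge) auto

lemma abs_sort_net_le:
  assumes "i < d"
  shows "\<bar>sort_net d \<delta> x i\<bar> \<le> real d * linf d x"
proof -
  have "\<bar>sort_net d \<delta> x i\<bar> \<le> (\<Sum>j<d. \<bar>relu_hat (soft_rank d \<delta> x j - real i) (x j)\<bar>)"
    unfolding sort_net_eq[OF assms] by (rule sum_abs)
  also have "\<dots> \<le> (\<Sum>j<d. linf d x)"
    by (intro sum_mono order.trans[OF abs_relu_hat_le abs_le_linf]) simp
  finally show ?thesis by simp
qed

lemma sort_net_params_bounded:
  assumes "0 < d" "0 < \<delta>" "real d * \<delta> \<le> 1"
  shows "params_bounded (1 / \<delta>) d (4 * d\<^sup>2) (4 * d\<^sup>2) d
           (sort_W1 d \<delta>) sort_b1 (sort_W2 d) (sort_b2 d) (sort_W3 d) (\<lambda>_. 0)"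
proof -
  have d_le: "real d \<le> 1 / \<delta>"
    using assms by (simp add: field_simps)
  then have one_le: "1 \<le> 1 / \<delta>"
    using assms(1) by linarith
  have "\<bar>sort_W1 d \<delta> n l\<bar> \<le> 1 / \<delta>" for n l
    using one_le assms(2) by (auto simp: sort_W1_def Let_def)
  moreover have "\<bar>sort_b1 n\<bar> \<le> 1 / \<delta>" for n
    using one_le assms(2) by (simp add: sort_b1_def)
  moreover have "\<bar>sort_W2 d m n\<bar> \<le> 1 / \<delta>" for m n
    using one_le assms(2) by (simp add: sort_W2_def hat_shift_def Let_def)
  moreover have "\<bar>sort_b2 d m\<bar> \<le> 1 / \<delta>" if "m < 4 * d\<^sup>2" for m
  proof -
    have "m div 4 div d < d"
      using that by (simp add: less_mult_imp_div_less power2_eq_square)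
    then show ?thesis
      using d_le by (simp add: sort_b2_def)
  qed
  moreover have "\<bar>sort_W3 d i m\<bar> \<le> 1 / \<delta>" for i m
    using one_le assms(2) by (simp add: sort_W3_def hat_weight_def)
  ultimately show ?thesis
    using assms(2) by (simp add: params_bounded_def)
qed

lemma sort_net_sorts:
  assumes "in_S d \<delta> x" "\<forall>i<d. x i \<noteq> 0" "0 < \<delta>"
  shows "sorts_to d x (sort_net d \<delta> x)"
proof -
  have sep: "separated d \<delta> x"
    using in_S_separated[OF assms(1,2)] .
  have inj: "inj_on x {..<d}"
    using separated_inj_on[OF sep assms(3)] .
  have inj_rank: "inj_on (rank d x) {..<d}"
    using bij_betw_rank[OF inj] by (rule bij_betw_imp_inj_on)
  have "sort_net d \<delta> x (rank d x j) = x j" if j: "j < d" for j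
  proof -
    have "relu_hat (soft_rank d \<delta> x l - real (rank d x j)) (x l) = (if l = j then x j else 0)"
      if l: "l < d" for l
    proof -
      have "0 \<le> x l" "x l \<le> 1"
        using assms(1,2,3) l unfolding in_S_def by (auto intro: order_trans)
      moreover have "rank d x l = rank d x j \<longleftrightarrow> l = j"
        using inj_rank j l by (auto dest: inj_onD)
      ultimately show ?thesis
        using relu_hat_of_int[of "x l" "int (rank d x l) - int (rank d x j)"]
        by (simp add: soft_rank_eq_rank[OF sep assms(3) l])
    qed
    then show ?thesis
      using j by (simp add: sort_net_eq rank_less)
  qed
  then show ?thesis
    using sorts_to_by_rank[OF inj] by blast
qed

theorem propositionB1:
  fixes d :: nat and \<delta> :: real
  assumes "d > 0" and "\<delta> > 0"
  shows "\<exists>n1 n2 W1 b1 W2 b2 W3 b3.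
           max n1 n2 = 4 * d^2 \<and>
           params_bounded (1 / \<delta>) d n1 n2 d W1 b1 W2 b2 W3 b3 \<and>
           (\<forall>x. in_S d \<delta> x \<and> (\<forall>i<d. x i \<noteq> 0) \<longrightarrow>
                sorts_to d x (relu_net2 d n1 n2 W1 b1 W2 b2 W3 b3 x)) \<and>
           (\<forall>x i. i < d \<longrightarrow>
                \<bar>relu_net2 d n1 n2 W1 b1 W2 b2 W3 b3 x i\<bar> \<le> real d * linf d x)"
proof (cases "real d * \<delta> \<le> 1")
  case True
  have "max (4 * d\<^sup>2) (4 * d\<^sup>2) = 4 * d\<^sup>2 \<and>
        params_bounded (1 / \<delta>) d (4 * d\<^sup>2) (4 * d\<^sup>2) d
          (sort_W1 d \<delta>) sort_b1 (sort_W2 d) (sort_b2 d) (sort_W3 d) (\<lambda>_. 0) \<and>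
        (\<forall>x. in_S d \<delta> x \<and> (\<forall>i<d. x i \<noteq> 0) \<longrightarrow> sorts_to d x (sort_net d \<delta> x)) \<and>
        (\<forall>x i. i < d \<longrightarrow> \<bar>sort_net d \<delta> x i\<bar> \<le> real d * linf d x)"
    using sort_net_params_bounded[OF assms True] sort_net_sorts[OF _ _ assms(2)] abs_sort_net_le
    by simp
  then show ?thesis
    by (intro exI) assumption
next
  case False
  define W :: "nat \<Rightarrow> nat \<Rightarrow> real" where "W = (\<lambda>_ _. 0)"
  define b :: "nat \<Rightarrow> real" where "b = (\<lambda>_. 0)"
  have "max (4 * d\<^sup>2) (4 * d\<^sup>2) = 4 * d\<^sup>2"
    by simp
  moreover have "params_bounded (1 / \<delta>) d (4 * d\<^sup>2) (4 * d\<^sup>2) d W b W b W b"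
    using assms(2) by (simp add: params_bounded_def W_def b_def)
  moreover have "\<not> (in_S d \<delta> x \<and> (\<forall>i<d. x i \<noteq> 0))" for x
    using in_S_nonzero_delta_bound[of d \<delta> x] assms False by (auto simp: algebra_simps)
  moreover have "\<bar>relu_net2 d (4 * d\<^sup>2) (4 * d\<^sup>2) W b W b W b x i\<bar> \<le> real d * linf d x" for x i
    using abs_le_linf[OF assms(1), of x] by (simp add: relu_net2_def affine_def W_def b_def)
  ultimately show ?thesis
    by (intro exI) blast
qed

end
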